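(* Let $q(n)$ denote the number of partitions of $n$ into distinct parts, with $q(0)=1$ and $q(n)=0$ for $n<0$, and define $s(n)=q(n)-2q(n-1)+q(n-2)$. Then for every integer $n\ge 6$, $s(n)$ equals the number of partitions of $n$ with parts $q_1\ge q_2\ge\dots\ge q_h$ such that $h\ge 4$, $q_j-q_{j+1}\in\{0,1\}$ for all $1\le j<h$, $q_1=q_2$, and the three smallest parts are $q_{h-2}=3$, $q_{h-1}=2$, $q_h=1$.
   Context: $q(n)$ counts strict partitions (partitions into distinct parts) of $n$. *)

theory Defs
  imports Main
begin

definition is_partition :: "nat \<Rightarrow> nat list \<Rightarrow> bool" where
  "is_partition n xs \<longleftrightarrow> sorted_wrt (\<ge>) xs \<and> (\<forall>x\<in>set xs. 0 < x) \<and> sum_list xs = n"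

definition strict_partitions :: "nat \<Rightarrow> nat list set" where
  "strict_partitions n = {xs. is_partition n xs \<and> distinct xs}"

definition q :: "int \<Rightarrow> int" where
  "q n = (if n < 0 then 0 else int (card (strict_partitions (nat n))))"

definition s :: "int \<Rightarrow> int" where
  "s n = q n - 2 * q (n - 1) + q (n - 2)"

definition special_partitions :: "nat \<Rightarrow> nat list set" where
  "special_partitions n = {xs. is_partition n xs \<and>
      (let h = length xs in
        h \<ge> 4 \<and>
        (\<forall>j. j + 1 < h \<longrightarrow> xs ! j - xs ! (j + 1) \<in> {0, 1}) \<and>
        xs ! 0 = xs ! 1 \<and>
        xs ! (h - 3) = 3 \<and> xs ! (h - 2) = 2 \<and> xs ! (h - 1) = 1)}"

end

theory Submission
  imports Defs "HOL-Library.Sublist"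
begin

text \<open>Conjugation (transposing the Ferrers diagram) maps the partitions of n into distinct parts
bijectively onto the gap-free partitions of n, whose parts descend from the largest one down to 1
in steps of 0 or 1; so q(n) = G(n), the number of these, and s(n) is the second difference of G.
Deleting a final part 1 identifies the gap-free partitions of n that do not end in 2, 1 with
those of n - 1, hence G(n) - G(n - 1) = A(n), the number ending in 2, 1. Lowering an unrepeated
largest part by one gives A(n) = P(n - 1) + P(n), where P counts those whose largest part is
repeated, so s(n) = A(n) - A(n - 1) = P(n) - P(n - 2). Finally, deleting one 2 from a tail 2, 2, 1
matches P(n - 2) with the members of P(n) that do not end in 3, 2, 1, and the members that do are
exactly the special partitions of n.\<close>

lemma card_eq_by_inj_on_image_Diff:
  assumes "finite B" "C \<subseteq> B" "inj_on f A" "f ` A = B - C"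
  shows "card B = card A + card C"
proof -
  have "card B = card (B - C) + card C"
    using assms(1,2) by (simp add: card_Diff_subset finite_subset card_mono)
  then show ?thesis
    using card_image[OF assms(3)] assms(4) by simp
qed

lemma count_list_le_1_if_distinct: "distinct xs \<Longrightarrow> count_list xs x \<le> 1"
  by (induction xs) auto

lemma finite_positive_lists_with_sum:
  "finite {xs :: nat list. (\<forall>x\<in>set xs. 0 < x) \<and> sum_list xs = n}"
proof (rule finite_subset[OF _ finite_lists_length_le[OF finite_atMost, of n n]])
  have "length xs \<le> sum_list xs" if "\<forall>x\<in>set xs. 0 < x" for xs :: "nat list"
    using that by (induction xs) auto
  moreover have "x \<le> sum_list xs" if "x \<in> set xs" for x and xs :: "nat list"
    using that by (induction xs) auto
  ultimately show "{xs. (\<forall>x\<in>set xs. 0 < x) \<and> sum_list xs = n}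
      \<subseteq> {xs. set xs \<subseteq> {..n} \<and> length xs \<le> n}"
    by fastforce
qed

definition gap_free :: "nat list \<Rightarrow> bool" where
  "gap_free xs \<longleftrightarrow>
    successively (\<lambda>x y. x = y \<or> x = Suc y) xs \<and> (xs \<noteq> [] \<longrightarrow> last xs = 1)"

lemma gap_free_Cons_Cons [simp]:
  "gap_free (x # y # zs) \<longleftrightarrow> (x = y \<or> x = Suc y) \<and> gap_free (y # zs)"
  by (simp add: gap_free_def)

lemma gap_free_imp_partition:
  assumes "gap_free xs"
  shows "sorted_wrt (\<ge>) xs" and "\<forall>x\<in>set xs. 0 < x"
proof -
  have "successively (\<ge>) xs"
    using assms successively_mono by (fastforce simp: gap_free_def)
  then show "sorted_wrt (\<ge>) xs"
    by (simp add: successively_conv_sorted_wrt transp_def)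
  show "\<forall>x\<in>set xs. 0 < x"
    using assms by (induction xs rule: induct_list012) (auto simp: gap_free_def)
qed

lemma gap_free_in_set:
  assumes "gap_free (a # xs)" "1 \<le> v" "v \<le> a"
  shows "v \<in> set (a # xs)"
  using assms
proof (induction xs arbitrary: a)
  case Nil
  then show ?case by (simp add: gap_free_def)
next
  case (Cons y zs)
  then show ?case by (cases "v = a") auto
qed

lemma gap_free_iff_nth:
  "gap_free xs \<longleftrightarrow> sorted_wrt (\<ge>) xs \<and> (\<forall>j. j + 1 < length xs \<longrightarrow> xs ! j - xs ! (j + 1) \<in> {0, 1})
     \<and> (xs \<noteq> [] \<longrightarrow> last xs = 1)"
proof -
  have "successively (\<lambda>x y. x = y \<or> x = Suc y) xs
      \<longleftrightarrow> (\<forall>j. j + 1 < length xs \<longrightarrow> xs ! j - xs ! (j + 1) \<in> {0, 1})"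
    if sorted: "sorted_wrt (\<ge>) xs"
  proof -
    have "xs ! Suc j \<le> xs ! j" if "Suc j < length xs" for j
      using sorted_wrt_nth_less[OF sorted, of j "Suc j"] that by simp
    then show ?thesis
      unfolding successively_conv_nth by fastforce
  qed
  then show ?thesis
    using gap_free_imp_partition(1) by (auto simp: gap_free_def)
qed

lemma gap_free_snoc_1:
  assumes "\<not> suffix [2] xs"
  shows "gap_free (xs @ [1]) \<longleftrightarrow> gap_free xs"
  using assms by (cases xs rule: rev_cases) (auto simp: gap_free_def successively_append_iff)

lemma gap_free_append_2_2_1: "gap_free (xs @ [2, 2, 1]) \<longleftrightarrow> gap_free (xs @ [2, 1])"
  by (simp add: gap_free_def successively_append_iff)

definition gap_free_partitions :: "nat \<Rightarrow> nat list set" where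
  "gap_free_partitions n = {xs. gap_free xs \<and> sum_list xs = n}"

lemma finite_gap_free_partitions: "finite (gap_free_partitions n)"
  by (rule finite_subset[OF _ finite_positive_lists_with_sum[of n]])
     (auto simp: gap_free_partitions_def dest: gap_free_imp_partition(2))

definition parts_above :: "nat list \<Rightarrow> nat \<Rightarrow> nat" where
  "parts_above xs j = length (filter (\<lambda>x. j < x) xs)"

definition conjugate :: "nat list \<Rightarrow> nat list" where
  "conjugate xs = map (parts_above xs) [0..<(case xs of [] \<Rightarrow> 0 | x # _ \<Rightarrow> x)]"

lemma parts_above_Suc: "parts_above xs j = parts_above xs (Suc j) + count_list xs (Suc j)"
  by (induction xs) (auto simp: parts_above_def)

lemma nth_conjugate_eq_add_count_list:
  assumes "Suc i < length (conjugate xs)"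
  shows "conjugate xs ! i = conjugate xs ! Suc i + count_list xs (Suc i)"
  using assms parts_above_Suc[of xs i] by (cases xs) (simp_all add: conjugate_def)

lemma sum_list_parts_above:
  "sum_list (map (parts_above xs) [0..<m]) = sum_list (map (\<lambda>x. min x m) xs)"
proof (induction xs)
  case Nil
  then show ?case by (simp add: parts_above_def)
next
  case (Cons a xs)
  have "sum_list (map (\<lambda>j. if j < a then 1 else 0) [0..<m]) = min a m"
    by (induction m) auto
  moreover have "parts_above (a # xs) = (\<lambda>j. (if j < a then 1 else 0) + parts_above xs j)"
    by (auto simp: parts_above_def)
  ultimately show ?case
    using Cons by (simp add: sum_list_addf)
qed

lemma sum_list_conjugate:
  assumes "sorted_wrt (\<ge>) xs"
  shows "sum_list (conjugate xs) = sum_list xs"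
proof (cases xs)
  case (Cons a ys)
  then have "map (\<lambda>x. min x a) xs = xs"
    using assms by (auto intro!: map_idI)
  then show ?thesis
    using Cons sum_list_parts_above[of xs a] by (simp add: conjugate_def)
qed (simp add: conjugate_def)

lemma less_parts_above_iff:
  assumes "sorted_wrt (\<ge>) xs"
  shows "i < parts_above xs j \<longleftrightarrow> i < length xs \<and> j < xs ! i"
  using assms
proof (induction xs arbitrary: i)
  case Nil
  then show ?case by (simp add: parts_above_def)
next
  case (Cons a xs)
  show ?case
  proof (cases "j < a")
    case True
    then show ?thesis using Cons by (cases i) (auto simp: parts_above_def)
  next
    case False
    then have "filter (\<lambda>x. j < x) xs = []"
      using Cons.prems by (auto simp: filter_empty_conv)
    moreover have "(a # xs) ! i \<le> a" if "i < length (a # xs)"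
      using Cons.prems that by (cases i) auto
    ultimately show ?thesis
      using False by (auto simp: parts_above_def)
  qed
qed

lemma conjugate_conjugate:
  assumes sorted: "sorted_wrt (\<ge>) xs" and pos: "\<forall>x\<in>set xs. 0 < x"
  shows "conjugate (conjugate xs) = xs"
proof (cases xs)
  case (Cons a ys)
  have "parts_above xs 0 = length xs"
    using pos by (auto simp: parts_above_def)
  then have conj: "conjugate xs = length xs # map (parts_above xs) [1..<a]"
    using Cons pos by (simp add: conjugate_def upt_rec)
  show ?thesis
  proof (rule nth_equalityI)
    show length_eq: "length (conjugate (conjugate xs)) = length xs"
      using conj by (simp add: conjugate_def)
    fix i
    assume "i < length (conjugate (conjugate xs))"
    then have i: "i < length xs"
      using length_eq by simp
    have "conjugate (conjugate xs) ! i = parts_above (conjugate xs) i"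
      using conj i by (simp add: conjugate_def)
    also have "\<dots> = length (filter (\<lambda>j. i < parts_above xs j) [0..<a])"
      using Cons by (simp add: parts_above_def conjugate_def filter_map comp_def)
    also have "\<dots> = length (filter (\<lambda>j. j < xs ! i) [0..<a])"
      using less_parts_above_iff[OF sorted] i by simp
    also have "\<dots> = xs ! i"
    proof -
      have "xs ! i \<le> a"
        using sorted i Cons by (cases i) auto
      moreover have "length (filter (\<lambda>j. j < b) [0..<m]) = min b m" for b m :: nat
        by (induction m) auto
      ultimately show ?thesis
        by simp
    qed
    finally show "conjugate (conjugate xs) ! i = xs ! i" .
  qed
qed (simp add: conjugate_def)

lemma conjugate_strict_partition:
  assumes "xs \<in> strict_partitions n"
  shows "conjugate xs \<in> gap_free_partitions n"
proof (cases xs)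
  case Nil
  then show ?thesis
    using assms
    by (simp add: conjugate_def gap_free_def gap_free_partitions_def strict_partitions_def is_partition_def)
next
  case (Cons a ys)
  from assms have sorted: "sorted_wrt (\<ge>) xs" and pos: "\<forall>x\<in>set xs. 0 < x"
    and sum: "sum_list xs = n" and dist: "distinct xs"
    by (auto simp: strict_partitions_def is_partition_def)
  have conj: "conjugate xs = map (parts_above xs) [0..<a]"
    using Cons by (simp add: conjugate_def)
  have "successively (\<lambda>x y. x = y \<or> x = Suc y) (conjugate xs)"
    unfolding successively_conv_nth
  proof (intro allI impI)
    fix i
    assume i: "Suc i < length (conjugate xs)"
    show "conjugate xs ! i = conjugate xs ! Suc i \<or> conjugate xs ! i = Suc (conjugate xs ! Suc i)"
      using nth_conjugate_eq_add_count_list[OF i] count_list_le_1_if_distinct[OF dist, of "Suc i"]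
      by auto
  qed
  moreover have "last (conjugate xs) = 1"
  proof -
    have "y < a" if "y \<in> set ys" for y
      using sorted dist Cons that by (auto simp: order.strict_iff_order)
    then have "filter (\<lambda>y. a - 1 < y) ys = []"
      by (fastforce simp: filter_empty_conv)
    then show ?thesis
      using conj Cons pos by (simp add: last_map parts_above_def)
  qed
  ultimately show ?thesis
    using sum_list_conjugate[OF sorted] sum by (simp add: gap_free_def gap_free_partitions_def)
qed

lemma conjugate_gap_free_partition:
  assumes "xs \<in> gap_free_partitions n"
  shows "conjugate xs \<in> strict_partitions n"
proof (cases xs)
  case Nil
  then show ?thesis
    using assms by (simp add: conjugate_def strict_partitions_def is_partition_def gap_free_partitions_def)
next
  case (Cons a ys)
  from assms have gf: "gap_free xs" and sum: "sum_list xs = n"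
    by (auto simp: gap_free_partitions_def)
  have conj: "conjugate xs = map (parts_above xs) [0..<a]"
    using Cons by (simp add: conjugate_def)
  have "successively (>) (conjugate xs)"
    unfolding successively_conv_nth
  proof (intro allI impI)
    fix i
    assume i: "Suc i < length (conjugate xs)"
    then have "Suc i \<in> set xs"
      using gap_free_in_set[of a ys "Suc i"] gf Cons conj by auto
    then have "count_list xs (Suc i) \<noteq> 0"
      by (simp add: count_list_0_iff)
    then show "conjugate xs ! i > conjugate xs ! Suc i"
      using nth_conjugate_eq_add_count_list[OF i] by simp
  qed
  then have strict: "sorted_wrt (>) (conjugate xs)"
    by (simp add: successively_conv_sorted_wrt transp_def)
  then have "distinct (conjugate xs)"
    by (metis sorted_wrt_rev strict_sorted_iff distinct_rev)
  moreover have "sorted_wrt (\<ge>) (conjugate xs)"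
    using strict by (rule sorted_wrt_mono_rel[rotated]) auto
  moreover have "\<forall>x\<in>set (conjugate xs). 0 < x"
    using conj Cons by (auto simp: parts_above_def filter_empty_conv)
  ultimately show ?thesis
    using sum_list_conjugate[OF gap_free_imp_partition(1)[OF gf]] sum
    by (simp add: strict_partitions_def is_partition_def)
qed

lemma card_strict_partitions: "card (strict_partitions n) = card (gap_free_partitions n)"
proof (rule bij_betw_same_card[of conjugate], rule bij_betw_byWitness[of _ conjugate])
  show "\<forall>xs\<in>strict_partitions n. conjugate (conjugate xs) = xs"
    by (auto intro!: conjugate_conjugate simp: strict_partitions_def is_partition_def)
  show "\<forall>xs\<in>gap_free_partitions n. conjugate (conjugate xs) = xs"
    by (auto intro!: conjugate_conjugate dest: gap_free_imp_partition simp: gap_free_partitions_def)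
  show "conjugate ` strict_partitions n \<subseteq> gap_free_partitions n"
    using conjugate_strict_partition by blast
  show "conjugate ` gap_free_partitions n \<subseteq> strict_partitions n"
    using conjugate_gap_free_partition by blast
qed

fun top_repeated :: "nat list \<Rightarrow> bool" where
  "top_repeated (a # b # _) \<longleftrightarrow> a = b"
| "top_repeated _ \<longleftrightarrow> False"

lemma top_repeated_append_2_2_1:
  assumes "xs \<noteq> []"
  shows "top_repeated (xs @ [2, 2, 1]) \<longleftrightarrow> top_repeated (xs @ [2, 1])"
  using assms by (cases xs rule: top_repeated.cases) auto

definition gap_free_ending :: "nat list \<Rightarrow> nat \<Rightarrow> nat list set" where
  "gap_free_ending sfx n = {xs \<in> gap_free_partitions n. suffix sfx xs}"

definition top_repeated_ending :: "nat list \<Rightarrow> nat \<Rightarrow> nat list set" where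
  "top_repeated_ending sfx n = {xs \<in> gap_free_ending sfx n. top_repeated xs}"

lemma image_snoc_1_gap_free_partitions:
  "(\<lambda>xs. xs @ [1]) ` gap_free_partitions n
    = gap_free_partitions (Suc n) - gap_free_ending [2, 1] (Suc n)"
proof (intro equalityI subsetI)
  fix ys
  assume "ys \<in> (\<lambda>xs. xs @ [1]) ` gap_free_partitions n"
  then obtain xs where ys: "ys = xs @ [1]" and gf: "gap_free xs" and sum: "sum_list xs = n"
    by (auto simp: gap_free_partitions_def)
  have "\<not> suffix [2] xs"
    using gf by (cases xs rule: rev_cases) (auto simp: gap_free_def)
  then show "ys \<in> gap_free_partitions (Suc n) - gap_free_ending [2, 1] (Suc n)"
    using gf sum ys gap_free_snoc_1
    by (auto simp: gap_free_partitions_def gap_free_ending_def)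
next
  fix ys
  assume ys: "ys \<in> gap_free_partitions (Suc n) - gap_free_ending [2, 1] (Suc n)"
  then have "ys \<noteq> []" and "gap_free ys"
    by (auto simp: gap_free_partitions_def)
  then obtain xs where xs: "ys = xs @ [1]"
    by (metis append_butlast_last_id gap_free_def)
  then have "\<not> suffix [2] xs"
    using ys by (auto simp: gap_free_ending_def)
  then show "ys \<in> (\<lambda>xs. xs @ [1]) ` gap_free_partitions n"
    using ys xs gap_free_snoc_1 by (auto simp: gap_free_partitions_def gap_free_ending_def)
qed

lemma card_gap_free_partitions_Suc:
  "card (gap_free_partitions (Suc n))
    = card (gap_free_partitions n) + card (gap_free_ending [2, 1] (Suc n))"
  by (rule card_eq_by_inj_on_image_Diff[OF finite_gap_free_partitions _ _ image_snoc_1_gap_free_partitions])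
     (auto simp: gap_free_ending_def inj_on_def)

text \<open>The exception n = 2: lowering the top of [2, 1] leaves [1, 1], which does not end in 2, 1.\<close>
lemma image_raise_top_top_repeated_ending:
  assumes "n \<noteq> 2"
  shows "(\<lambda>xs. Suc (hd xs) # tl xs) ` top_repeated_ending [2, 1] n
    = gap_free_ending [2, 1] (Suc n) - top_repeated_ending [2, 1] (Suc n)"
proof (intro equalityI subsetI)
  fix zs
  assume "zs \<in> (\<lambda>xs. Suc (hd xs) # tl xs) ` top_repeated_ending [2, 1] n"
  then obtain xs where zs: "zs = Suc (hd xs) # tl xs" and xs: "xs \<in> top_repeated_ending [2, 1] n"
    by blast
  then obtain a ys where "xs = a # a # ys"
    by (cases xs rule: top_repeated.cases) (auto simp: top_repeated_ending_def)
  then show "zs \<in> gap_free_ending [2, 1] (Suc n) - top_repeated_ending [2, 1] (Suc n)"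
    using zs xs
    by (auto simp: top_repeated_ending_def gap_free_ending_def gap_free_partitions_def suffix_Cons)
next
  fix zs
  assume zs: "zs \<in> gap_free_ending [2, 1] (Suc n) - top_repeated_ending [2, 1] (Suc n)"
  then have "suffix [2, 1] zs"
    by (simp add: gap_free_ending_def)
  then obtain x y ys where xyys: "zs = x # y # ys"
    by (cases zs rule: top_repeated.cases) (auto simp: suffix_def)
  then have "x = Suc y"
    using zs by (auto simp: top_repeated_ending_def gap_free_ending_def gap_free_partitions_def)
  moreover have "y # y # ys \<in> top_repeated_ending [2, 1] n"
    using zs xyys \<open>x = Suc y\<close> assms
    by (auto simp: top_repeated_ending_def gap_free_ending_def gap_free_partitions_def suffix_Cons)
  ultimately show "zs \<in> (\<lambda>xs. Suc (hd xs) # tl xs) ` top_repeated_ending [2, 1] n"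
    using xyys by (auto intro!: image_eqI[of _ _ "y # y # ys"])
qed

lemma card_gap_free_ending_Suc:
  assumes "n \<noteq> 2"
  shows "card (gap_free_ending [2, 1] (Suc n))
    = card (top_repeated_ending [2, 1] n) + card (top_repeated_ending [2, 1] (Suc n))"
proof (rule card_eq_by_inj_on_image_Diff[OF _ _ _ image_raise_top_top_repeated_ending[OF assms]])
  show "finite (gap_free_ending [2, 1] (Suc n))"
    using finite_gap_free_partitions by (simp add: gap_free_ending_def)
  show "top_repeated_ending [2, 1] (Suc n) \<subseteq> gap_free_ending [2, 1] (Suc n)"
    by (auto simp: top_repeated_ending_def)
  show "inj_on (\<lambda>xs. Suc (hd xs) # tl xs) (top_repeated_ending [2, 1] n)"
  proof (rule inj_onI)
    fix xs ys
    assume "xs \<in> top_repeated_ending [2, 1] n" "ys \<in> top_repeated_ending [2, 1] n"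
      and eq: "Suc (hd xs) # tl xs = Suc (hd ys) # tl ys"
    then have "xs \<noteq> []" "ys \<noteq> []"
      by (auto simp: top_repeated_ending_def)
    then show "xs = ys"
      using eq by (metis list.collapse list.inject nat.inject)
  qed
qed

text \<open>The exception n = 3: deleting a 2 from [2, 2, 1] leaves [2, 1], whose top is not repeated.\<close>
lemma image_insert_2_top_repeated_ending:
  assumes "n \<noteq> 3"
  shows "(\<lambda>xs. butlast xs @ [2, 1]) ` top_repeated_ending [2, 1] n
    = top_repeated_ending [2, 1] (n + 2) - top_repeated_ending [3, 2, 1] (n + 2)"
proof (intro equalityI subsetI)
  fix zs
  assume "zs \<in> (\<lambda>xs. butlast xs @ [2, 1]) ` top_repeated_ending [2, 1] n"
  then obtain xs ys where zs: "zs = ys @ [2, 2, 1]" and xs: "xs \<in> top_repeated_ending [2, 1] n"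
    and ys: "xs = ys @ [2, 1]"
    by (auto simp: top_repeated_ending_def gap_free_ending_def suffix_def butlast_append)
  have "ys \<noteq> []"
    using xs ys by (auto simp: top_repeated_ending_def)
  then show "zs \<in> top_repeated_ending [2, 1] (n + 2) - top_repeated_ending [3, 2, 1] (n + 2)"
    using xs ys zs gap_free_append_2_2_1 top_repeated_append_2_2_1
    by (auto simp: top_repeated_ending_def gap_free_ending_def gap_free_partitions_def suffix_to_prefix)
next
  fix zs
  assume zs: "zs \<in> top_repeated_ending [2, 1] (n + 2) - top_repeated_ending [3, 2, 1] (n + 2)"
  then obtain ys where ys: "zs = ys @ [2, 1]" and gf: "gap_free zs" and top: "top_repeated zs"
    by (auto simp: top_repeated_ending_def gap_free_ending_def gap_free_partitions_def suffix_def)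
  have "ys \<noteq> []"
    using top ys by auto
  then obtain ws w where ws: "ys = ws @ [w]"
    by (cases ys rule: rev_cases) auto
  have "w = 2 \<or> w = 3"
    using gf ys ws by (simp add: gap_free_def successively_append_iff)
  moreover have "suffix [3, 2, 1] zs" if "w = 3"
    using that ys ws by (auto simp: suffix_def)
  ultimately have "w = 2"
    using zs by (auto simp: top_repeated_ending_def gap_free_ending_def)
  have "ws \<noteq> []"
    using zs ys ws \<open>w = 2\<close> assms
    by (auto simp: top_repeated_ending_def gap_free_ending_def gap_free_partitions_def)
  then have "ws @ [2, 1] \<in> top_repeated_ending [2, 1] n"
    using zs ys ws \<open>w = 2\<close> gap_free_append_2_2_1 top_repeated_append_2_2_1
    by (auto simp: top_repeated_ending_def gap_free_ending_def gap_free_partitions_def suffix_def)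
  then show "zs \<in> (\<lambda>xs. butlast xs @ [2, 1]) ` top_repeated_ending [2, 1] n"
    using ys ws \<open>w = 2\<close> by (auto intro!: image_eqI[of _ _ "ws @ [2, 1]"] simp: butlast_append)
qed

lemma card_top_repeated_ending_add_2:
  assumes "n \<noteq> 3"
  shows "card (top_repeated_ending [2, 1] (n + 2))
    = card (top_repeated_ending [2, 1] n) + card (top_repeated_ending [3, 2, 1] (n + 2))"
proof (rule card_eq_by_inj_on_image_Diff[OF _ _ _ image_insert_2_top_repeated_ending[OF assms]])
  show "finite (top_repeated_ending [2, 1] (n + 2))"
    using finite_gap_free_partitions by (simp add: top_repeated_ending_def gap_free_ending_def)
  show "top_repeated_ending [3, 2, 1] (n + 2) \<subseteq> top_repeated_ending [2, 1] (n + 2)"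
    by (auto simp: top_repeated_ending_def gap_free_ending_def suffix_def)
  show "inj_on (\<lambda>xs. butlast xs @ [2, 1]) (top_repeated_ending [2, 1] n)"
    by (rule inj_onI) (auto simp: top_repeated_ending_def gap_free_ending_def suffix_def butlast_append)
qed

lemma special_partitions_eq: "special_partitions n = top_repeated_ending [3, 2, 1] n"
proof (intro set_eqI iffI)
  fix xs
  assume "xs \<in> special_partitions n"
  then obtain h where h: "h = length xs" "h \<ge> 4" and part: "is_partition n xs"
    and steps: "\<forall>j. j + 1 < h \<longrightarrow> xs ! j - xs ! (j + 1) \<in> {0, 1}"
    and top: "xs ! 0 = xs ! 1"
    and tail: "xs ! (h - 3) = 3" "xs ! (h - 2) = 2" "xs ! (h - 1) = 1"
    unfolding special_partitions_def Let_def by blast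
  have "length (drop (h - 3) xs) = Suc (Suc (Suc 0))"
    using h by simp
  then obtain a b c where abc: "drop (h - 3) xs = [a, b, c]"
    unfolding length_Suc_conv length_0_conv by blast
  define ys where "ys = take (h - 3) xs"
  have xs: "xs = ys @ [a, b, c]"
    using abc unfolding ys_def by (metis append_take_drop_id)
  have "length ys = h - 3"
    using xs h by simp
  then have "a = 3" "b = 2" "c = 1"
    using tail xs h by (simp_all add: nth_append)
  moreover have "top_repeated xs"
    using h top by (cases xs rule: top_repeated.cases) auto
  moreover have "gap_free xs"
    using part steps h xs \<open>c = 1\<close> unfolding gap_free_iff_nth is_partition_def by simp
  ultimately show "xs \<in> top_repeated_ending [3, 2, 1] n"
    using part xs
    by (auto intro: suffixI simp: top_repeated_ending_def gap_free_ending_def gap_free_partitions_def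
        is_partition_def)
next
  fix xs
  assume "xs \<in> top_repeated_ending [3, 2, 1] n"
  then obtain ys where gf: "gap_free xs" and sum: "sum_list xs = n" and top: "top_repeated xs"
    and xs: "xs = ys @ [3, 2, 1]"
    unfolding top_repeated_ending_def gap_free_ending_def gap_free_partitions_def suffix_def by blast
  have "ys \<noteq> []"
    using top xs by auto
  then have "length xs \<ge> 4"
    using xs by (cases ys) auto
  moreover have "xs ! 0 = xs ! 1"
    using top by (cases xs rule: top_repeated.cases) auto
  moreover have "is_partition n xs"
    using gap_free_imp_partition[OF gf] sum unfolding is_partition_def by simp
  moreover have "\<forall>j. j + 1 < length xs \<longrightarrow> xs ! j - xs ! (j + 1) \<in> {0, 1}"
    using gf by (simp add: gap_free_iff_nth)
  ultimately show "xs \<in> special_partitions n"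
    using xs unfolding special_partitions_def Let_def by (simp add: nth_append)
qed

lemma q_eq_card_gap_free_partitions: "q (int n) = int (card (gap_free_partitions n))"
  by (simp add: q_def card_strict_partitions)

theorem corollary1p5:
  fixes n :: nat
  assumes "n \<ge> 6"
  shows "s (int n) = int (card (special_partitions n))"
proof -
  define m where "m = n - 2"
  have n: "n = Suc (Suc m)" and m: "m \<ge> 4"
    using assms by (simp_all add: m_def)
  have "s (int n) = int (card (gap_free_partitions (Suc (Suc m))))
      - 2 * int (card (gap_free_partitions (Suc m))) + int (card (gap_free_partitions m))"
    using q_eq_card_gap_free_partitions[of m] q_eq_card_gap_free_partitions[of "Suc m"]
      q_eq_card_gap_free_partitions[of "Suc (Suc m)"]
    by (simp add: s_def n)
  also have "\<dots> = int (card (gap_free_ending [2, 1] (Suc (Suc m))))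
      - int (card (gap_free_ending [2, 1] (Suc m)))"
    using card_gap_free_partitions_Suc[of m] card_gap_free_partitions_Suc[of "Suc m"] by simp
  also have "\<dots> = int (card (top_repeated_ending [2, 1] (Suc (Suc m))))
      - int (card (top_repeated_ending [2, 1] m))"
    using card_gap_free_ending_Suc[of m] card_gap_free_ending_Suc[of "Suc m"] m by simp
  also have "\<dots> = int (card (special_partitions n))"
    using card_top_repeated_ending_add_2[of m] m by (simp add: special_partitions_eq n)
  finally show ?thesis .
qed

end
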